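(* Let $\mathbb{F}\in\{\mathbb{R},\mathbb{C}\}$, $S\in \mathsf{GL}_m(\mathbb{F})$ and $T\in \mathsf{GL}_n(\mathbb{F})$. Then $\mathcal{C}(S)\otimes\mathcal{C}(T)\subseteq \mathcal{C}(S\otimes T)$ and $\mathcal{P}(S)\otimes\mathcal{P}(T)\subseteq\mathcal{P}(S\otimes T)$.
   Context: For $x\in\mathbb{F}^n$, $D_x$ denotes the diagonal matrix whose $(i,i)$-entry is $x_i$. A matrix is written $M\ge 0$ if every entry of $M$ is a nonnegative real number. For $S\in\mathsf{GL}_n(\mathbb{F})$ (invertible $n\times n$ matrices over $\mathbb{F}$), the spectracone of $S$ is $\mathcal{C}(S)=\{x\in\mathbb{F}^n \mid S D_x S^{-1}\ge 0\}$ and the spectratope of $S$ is $\mathcal{P}(S)=\{x\in\mathcal{C}(S)\mid \|x\|_\infty=1\}$. $\otimes$ is the Kronecker product, $A\otimes B=[a_{ij}B]$ blockwise; for sets of vectors $X\subseteq\mathbb{F}^m$, $Y\subseteq\mathbb{F}^n$, $X\otimes Y:=\{x\otimes y\mid x\in X,\ y\in Y\}$. *)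

theory Defs
  imports "HOL-Analysis.Analysis"
begin

definition diag_mat :: "'a::zero ^ 'n \<Rightarrow> 'a ^ 'n ^ 'n" where
  "diag_mat x = (\<chi> i j. if i = j then x $ i else 0)"

definition nonneg_mat :: "'a::real_algebra_1 ^ 'n ^ 'm \<Rightarrow> bool" where
  "nonneg_mat M \<longleftrightarrow> (\<forall>i j. \<exists>r::real. 0 \<le> r \<and> M $ i $ j = of_real r)"

definition spectracone :: "'a::{real_algebra_1, semiring_1} ^ 'n ^ 'n \<Rightarrow> ('a ^ 'n) set" where
  "spectracone S = {x. nonneg_mat (S ** diag_mat x ** matrix_inv S)}"

definition sup_norm :: "'a::real_normed_vector ^ 'n \<Rightarrow> real" where
  "sup_norm x = Max (range (\<lambda>i. norm (x $ i)))"

definition spectratope :: "'a::{real_normed_algebra_1} ^ 'n ^ 'n \<Rightarrow> ('a ^ 'n) set" where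
  "spectratope S = {x \<in> spectracone S. sup_norm x = 1}"

text \<open>Kronecker products; the index set of the product is the pair type 'm \<times> 'n,
  i.e. row/column (i,k) corresponds to the lexicographic position of the usual Kronecker product.\<close>
definition kron_mat :: "'a::times ^ 'm ^ 'm \<Rightarrow> 'a ^ 'n ^ 'n \<Rightarrow> 'a ^ ('m \<times> 'n) ^ ('m \<times> 'n)" where
  "kron_mat S T = (\<chi> p q. S $ fst p $ fst q * T $ snd p $ snd q)"

definition kron_vec :: "'a::times ^ 'm \<Rightarrow> 'a ^ 'n \<Rightarrow> 'a ^ ('m \<times> 'n)" where
  "kron_vec x y = (\<chi> p. x $ fst p * y $ snd p)"

definition kron_set :: "('a::times ^ 'm) set \<Rightarrow> ('a ^ 'n) set \<Rightarrow> ('a ^ ('m \<times> 'n)) set" where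
  "kron_set X Y = {kron_vec x y | x y. x \<in> X \<and> y \<in> Y}"

end

theory Submission
  imports Defs
begin

text \<open>The Kronecker product is multiplicative, so
  \<open>(S \<otimes> T) D\<^bsub>x \<otimes> y\<^esub> (S \<otimes> T)\<^sup>-\<^sup>1 = (S D\<^sub>x S\<^sup>-\<^sup>1) \<otimes> (T D\<^sub>y T\<^sup>-\<^sup>1)\<close>,
  and every entry of the right-hand side is a product of two nonnegative reals.
  For the spectratopes, note in addition that the sup norm is multiplicative:
  \<open>\<parallel>x \<otimes> y\<parallel>\<^sub>\<infinity> = \<parallel>x\<parallel>\<^sub>\<infinity> \<parallel>y\<parallel>\<^sub>\<infinity>\<close>.\<close>

lemma kron_mat_mult:
  fixes A C :: "'a::comm_semiring_1 ^ 'm ^ 'm" and B D :: "'a ^ 'n ^ 'n"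
  shows "kron_mat A B ** kron_mat C D = kron_mat (A ** C) (B ** D)"
proof -
  have "(\<Sum>r\<in>UNIV. A $ fst p $ fst r * B $ snd p $ snd r * (C $ fst r $ fst q * D $ snd r $ snd q))
     = (\<Sum>k\<in>UNIV. A $ fst p $ k * C $ k $ fst q) * (\<Sum>l\<in>UNIV. B $ snd p $ l * D $ l $ snd q)"
    for p q :: "'m \<times> 'n"
  proof -
    have "(\<Sum>k\<in>UNIV. A $ fst p $ k * C $ k $ fst q) * (\<Sum>l\<in>UNIV. B $ snd p $ l * D $ l $ snd q)
      = (\<Sum>k\<in>UNIV. \<Sum>l\<in>UNIV. (A $ fst p $ k * C $ k $ fst q) * (B $ snd p $ l * D $ l $ snd q))"
      by (simp add: sum_product)
    also have "\<dots> = (\<Sum>r\<in>UNIV \<times> UNIV.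
        (A $ fst p $ fst r * C $ fst r $ fst q) * (B $ snd p $ snd r * D $ snd r $ snd q))"
      by (simp add: sum.cartesian_product case_prod_beta)
    finally show ?thesis by (simp add: UNIV_Times_UNIV ac_simps)
  qed
  then show ?thesis
    by (simp add: kron_mat_def matrix_matrix_mult_def vec_eq_iff)
qed

lemma kron_mat_one:
  "kron_mat (mat 1 :: 'a::comm_semiring_1 ^ 'm ^ 'm) (mat 1 :: 'a ^ 'n ^ 'n) = mat 1"
  by (auto simp: kron_mat_def mat_def vec_eq_iff prod_eq_iff)

lemma diag_mat_kron_vec:
  fixes x :: "'a::comm_semiring_1 ^ 'm" and y :: "'a ^ 'n"
  shows "diag_mat (kron_vec x y) = kron_mat (diag_mat x) (diag_mat y)"
  by (auto simp: kron_mat_def diag_mat_def kron_vec_def vec_eq_iff prod_eq_iff)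

lemma matrix_inv:
  fixes A :: "'a::semiring_1 ^ 'n ^ 'n"
  assumes "invertible A"
  shows "A ** matrix_inv A = mat 1" and "matrix_inv A ** A = mat 1"
  using someI_ex[OF assms[unfolded invertible_def]] by (simp_all add: matrix_inv_def)

lemma matrix_inv_unique:
  fixes A :: "'a::semiring_1 ^ 'n ^ 'n"
  assumes "A ** B = mat 1" and "B ** A = mat 1"
  shows "matrix_inv A = B"
proof -
  have "invertible A" using assms unfolding invertible_def by blast
  have "matrix_inv A = matrix_inv A ** (A ** B)" by (simp add: assms)
  also have "\<dots> = (matrix_inv A ** A) ** B" by (simp add: matrix_mul_assoc)
  also have "\<dots> = B" using matrix_inv(2)[OF \<open>invertible A\<close>] by simp
  finally show ?thesis .
qed

lemma matrix_inv_kron_mat: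
  fixes S :: "'a::comm_semiring_1 ^ 'm ^ 'm" and T :: "'a ^ 'n ^ 'n"
  assumes "invertible S" and "invertible T"
  shows "matrix_inv (kron_mat S T) = kron_mat (matrix_inv S) (matrix_inv T)"
  by (rule matrix_inv_unique)
    (simp_all add: kron_mat_mult kron_mat_one matrix_inv[OF assms(1)] matrix_inv[OF assms(2)])

lemma nonneg_mat_kron_mat:
  fixes A :: "'a::real_algebra_1 ^ 'm ^ 'm" and B :: "'a ^ 'n ^ 'n"
  assumes "nonneg_mat A" and "nonneg_mat B"
  shows "nonneg_mat (kron_mat A B)"
  unfolding nonneg_mat_def
proof (intro allI)
  fix p q :: "'m \<times> 'n"
  obtain r where "0 \<le> r" and r: "A $ fst p $ fst q = of_real r"
    using assms(1) unfolding nonneg_mat_def by blast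
  obtain s where "0 \<le> s" and s: "B $ snd p $ snd q = of_real s"
    using assms(2) unfolding nonneg_mat_def by blast
  have "kron_mat A B $ p $ q = of_real (r * s)"
    by (simp add: kron_mat_def r s of_real_mult)
  with \<open>0 \<le> r\<close> \<open>0 \<le> s\<close> show "\<exists>t. 0 \<le> (t::real) \<and> kron_mat A B $ p $ q = of_real t"
    by (intro exI[of _ "r * s"]) simp
qed

lemma kron_vec_in_spectracone:
  fixes S :: "'a::{real_algebra_1, comm_ring_1} ^ 'm ^ 'm" and T :: "'a ^ 'n ^ 'n"
  assumes "invertible S" and "invertible T"
    and "x \<in> spectracone S" and "y \<in> spectracone T"
  shows "kron_vec x y \<in> spectracone (kron_mat S T)"
proof -
  have "kron_mat S T ** diag_mat (kron_vec x y) ** matrix_inv (kron_mat S T)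
      = kron_mat (S ** diag_mat x ** matrix_inv S) (T ** diag_mat y ** matrix_inv T)"
    by (simp add: matrix_inv_kron_mat[OF assms(1,2)] diag_mat_kron_vec kron_mat_mult)
  with assms(3,4) show ?thesis
    unfolding spectracone_def by (simp add: nonneg_mat_kron_mat)
qed

lemma Max_range_mult_pair:
  fixes a :: "'m::finite \<Rightarrow> 'a::linordered_semiring" and b :: "'n::finite \<Rightarrow> 'a"
  assumes "\<And>i. 0 \<le> a i" and "\<And>k. 0 \<le> b k"
  shows "Max (range (\<lambda>p. a (fst p) * b (snd p))) = Max (range a) * Max (range b)"
proof -
  have "Max (range a) \<in> range a" and "Max (range b) \<in> range b"
    by (rule Max_in; simp)+
  then obtain i0 k0 where i0: "a i0 = Max (range a)" and k0: "b k0 = Max (range b)"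
    by (metis imageE)
  have le: "a (fst p) * b (snd p) \<le> Max (range a) * Max (range b)" for p
    by (rule mult_mono) (simp_all add: assms(2) assms(1)[of i0, unfolded i0])
  show ?thesis
  proof (rule antisym)
    show "Max (range (\<lambda>p. a (fst p) * b (snd p))) \<le> Max (range a) * Max (range b)"
      using le by (intro Max.boundedI) auto
    have "a (fst (i0, k0)) * b (snd (i0, k0)) \<le> Max (range (\<lambda>p. a (fst p) * b (snd p)))"
      by (rule Max_ge) (auto intro!: image_eqI[of _ _ "(i0, k0)"])
    then show "Max (range a) * Max (range b) \<le> Max (range (\<lambda>p. a (fst p) * b (snd p)))"
      using i0 k0 by simp
  qed
qed

lemma sup_norm_kron_vec:
  fixes x :: "'a::real_normed_field ^ 'm" and y :: "'a ^ 'n"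
  shows "sup_norm (kron_vec x y) = sup_norm x * sup_norm y"
  using Max_range_mult_pair[of "\<lambda>i. norm (x $ i)" "\<lambda>k. norm (y $ k)"]
  by (simp add: sup_norm_def kron_vec_def norm_mult)

lemma kron_set_spectracone_subset:
  fixes S :: "'a::{real_algebra_1, comm_ring_1} ^ 'm ^ 'm" and T :: "'a ^ 'n ^ 'n"
  assumes "invertible S" and "invertible T"
  shows "kron_set (spectracone S) (spectracone T) \<subseteq> spectracone (kron_mat S T)"
  using kron_vec_in_spectracone[OF assms] by (auto simp: kron_set_def)

lemma kron_set_spectratope_subset:
  fixes S :: "'a::real_normed_field ^ 'm ^ 'm" and T :: "'a ^ 'n ^ 'n"
  assumes "invertible S" and "invertible T"
  shows "kron_set (spectratope S) (spectratope T) \<subseteq> spectratope (kron_mat S T)"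
  using kron_vec_in_spectracone[OF assms]
  by (auto simp: kron_set_def spectratope_def sup_norm_kron_vec)

theorem theorem4p1:
  fixes S :: "real ^ 'm ^ 'm" and T :: "real ^ 'n ^ 'n"
    and S' :: "complex ^ 'm ^ 'm" and T' :: "complex ^ 'n ^ 'n"
  assumes "invertible S" and "invertible T"
    and "invertible S'" and "invertible T'"
  shows "kron_set (spectracone S) (spectracone T) \<subseteq> spectracone (kron_mat S T)
       \<and> kron_set (spectratope S) (spectratope T) \<subseteq> spectratope (kron_mat S T)
       \<and> kron_set (spectracone S') (spectracone T') \<subseteq> spectracone (kron_mat S' T')
       \<and> kron_set (spectratope S') (spectratope T') \<subseteq> spectratope (kron_mat S' T')"
  using assms
  by (simp add: kron_set_spectracone_subset kron_set_spectratope_subset)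

end
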